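(* Let $U=[N]=\{1,\dots,N\}$ be a finite set of candidate neurons, let $\tau\in(0,1]$ be a threshold, and let $E:2^{[N]}\to[0,1]$ be the (regime-conditional) strength set function defined in the context below. Let $A^\star=\{j\in[N]: E(\{j\})\ge\tau\}$ be the set of $\tau$-agonists. Consider the binary hierarchical search procedure $\mathrm{Search}(U)$: for the current group $U$ it computes an upper confidence bound $\widehat{E}^{\mathrm{UCB}}(U)$ from finite-sample estimates; if $\widehat{E}^{\mathrm{UCB}}(U)<\tau$ it prunes $U$ (returns $\emptyset$); otherwise, if $|U|=1$, say $U=\{j\}$, it queries $j$ as a singleton (computing a point estimate $\hat E(\{j\})$ and returning $\{j\}$ if $\hat E(\{j\})\ge\tau$, else $\emptyset$); otherwise it splits $U$ into two halves $U_1,U_2$ and returns $\mathrm{Search}(U_1)\cup\mathrm{Search}(U_2)$. Let $\mathcal{T}$ be the set of all groups (nodes of the full binary splitting tree) that could possibly be queried by this procedure. Assume: (A2) for every group $A$ queried by the search, $A\cap A^\star\neq\emptyset$ implies $E(A)\ge\tau$; (A3) for each tested group $A$, the upper confidence bound satisfies $\Pr\big[E(A)\le\widehat{E}^{\mathrm{UCB}}(A)\big]\ge 1-\alpha_A$, and a group is pruned only if $\widehat{E}^{\mathrm{UCB}}(A)<\tau$; and assume the confidence budgets satisfy $\sum_{A\in\mathcal{T}}\alpha_A\le\alpha_{\mathrm{tot}}$ (equivalently, an alpha-spending schedule over the full tree with total budget at most $\alpha_{\mathrm{tot}}$). Then, with probability at least $1-\alpha_{\mathrm{tot}}$, the procedure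 does not prune any group $A$ that contains an element of $A^\star$. Consequently, with this probability every $j\in A^\star$ lies on an unpruned root-to-leaf path of the splitting tree and is eventually queried as a singleton.
   Context: Setting: a fixed layer of a language model with $N$ candidate neurons (scalar activations) and a fixed baseline regime $b\in\{0,1\}$. Two finite evaluation sets (slices) $\mathcal{D}^+$ and $\mathcal{D}^-$ consist of inputs on which the un-intervened model's binary behavior label equals $b$. For a set $A\subseteq[N]$, the intervention $\mathrm{do}(A)$ replaces the activations of the neurons in $A$ by fixed baseline values, and $\delta_{S}(A)=\Pr_{x\sim\mathcal{D}^S}[\text{post-intervention behavior label of }x\neq b]$ for $S\in\{+,-\}$ (uniform distribution on the slice). The strength is $E(A)=\max\{\delta_+(A),\delta_-(A)\}$. A neuron $j$ is a $\tau$-agonist if $E(\{j\})\ge\tau$. The flip rates are estimated on finite samples, and $\widehat{E}^{\mathrm{UCB}}(A)$ denotes the resulting upper confidence bound on $E(A)$ (e.g., the maximum of one-sided Clopper–Pearson upper bounds for the two slices). *)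

theory Defs
  imports "HOL-Probability.Probability"
begin

text \<open>Flip rate on a finite slice D (uniform distribution):
  lab A x is the post-intervention behaviour label of input x under do(A).\<close>
definition flip_rate :: "(nat set \<Rightarrow> 'x \<Rightarrow> bool) \<Rightarrow> bool \<Rightarrow> 'x set \<Rightarrow> nat set \<Rightarrow> real" where
  "flip_rate lab b D A = real (card {x\<in>D. lab A x \<noteq> b}) / real (card D)"

definition strength :: "(nat set \<Rightarrow> 'x \<Rightarrow> bool) \<Rightarrow> bool \<Rightarrow> 'x set \<Rightarrow> 'x set \<Rightarrow> nat set \<Rightarrow> real" where
  "strength lab b Dp Dm A = max (flip_rate lab b Dp A) (flip_rate lab b Dm A)"

definition agonists :: "(nat set \<Rightarrow> real) \<Rightarrow> real \<Rightarrow> nat \<Rightarrow> nat set" where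
  "agonists E \<tau> N = {j \<in> {1..N}. E {j} \<ge> \<tau>}"

inductive_set split_tree :: "(nat set \<Rightarrow> nat set \<times> nat set) \<Rightarrow> nat set \<Rightarrow> nat set set"
  for split :: "nat set \<Rightarrow> nat set \<times> nat set" and R :: "nat set" where
  root: "R \<in> split_tree split R"
| left: "A \<in> split_tree split R \<Longrightarrow> 2 \<le> card A \<Longrightarrow> fst (split A) \<in> split_tree split R"
| right: "A \<in> split_tree split R \<Longrightarrow> 2 \<le> card A \<Longrightarrow> snd (split A) \<in> split_tree split R"

text \<open>Groups actually tested by Search(R) on the sample outcome w: a group is
  tested; it is pruned iff ucb < tau; an unpruned group of size >= 2 is split and
  both halves are tested; an unpruned singleton is queried as a singleton.\<close>
inductive queried :: "(nat set \<Rightarrow> nat set \<times> nat set) \<Rightarrow> nat set \<Rightarrow> (nat set \<Rightarrow> 'w \<Rightarrow> real)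
    \<Rightarrow> real \<Rightarrow> 'w \<Rightarrow> nat set \<Rightarrow> bool"
  for split R ucb \<tau> w where
  root: "queried split R ucb \<tau> w R"
| left: "queried split R ucb \<tau> w A \<Longrightarrow> \<tau> \<le> ucb A w \<Longrightarrow> 2 \<le> card A
          \<Longrightarrow> queried split R ucb \<tau> w (fst (split A))"
| right: "queried split R ucb \<tau> w A \<Longrightarrow> \<tau> \<le> ucb A w \<Longrightarrow> 2 \<le> card A
          \<Longrightarrow> queried split R ucb \<tau> w (snd (split A))"

definition pruned :: "(nat set \<Rightarrow> nat set \<times> nat set) \<Rightarrow> nat set \<Rightarrow> (nat set \<Rightarrow> 'w \<Rightarrow> real)
    \<Rightarrow> real \<Rightarrow> 'w \<Rightarrow> nat set \<Rightarrow> bool" where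
  "pruned split R ucb \<tau> w A \<longleftrightarrow> queried split R ucb \<tau> w A \<and> ucb A w < \<tau>"

end

theory Submission
  imports Defs
begin

text \<open>On the event that the upper confidence bound of every node of the splitting tree is
  valid, a queried group meeting an agonist has ucb at least its strength, which is at least
  tau by (A2); so it is never pruned, and following the halves that contain a fixed agonist
  leads down to its singleton. By the union bound over the finitely many nodes, that event
  has probability at least 1 - alpha_tot.\<close>

lemma (in prob_space) prob_all_ge_one_minus_sum:
  assumes "finite I"
    and events: "\<And>i. i \<in> I \<Longrightarrow> {x \<in> space M. P i x} \<in> events"
    and bound: "\<And>i. i \<in> I \<Longrightarrow> prob {x \<in> space M. P i x} \<ge> 1 - a i"
  shows "prob {x \<in> space M. \<forall>i \<in> I. P i x} \<ge> 1 - (\<Sum>i \<in> I. a i)"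
proof -
  let ?G = "{x \<in> space M. \<forall>i \<in> I. P i x}"
  have G_event: "?G \<in> events"
    using sets.sets_Collect_finite_All[OF events \<open>finite I\<close>] by simp
  have "prob (space M - ?G) = prob (\<Union>i \<in> I. space M - {x \<in> space M. P i x})"
    by (rule arg_cong[where f = prob]) auto
  also have "\<dots> \<le> (\<Sum>i \<in> I. prob (space M - {x \<in> space M. P i x}))"
    using events by (intro finite_measure_subadditive_finite[OF \<open>finite I\<close>]) auto
  also have "\<dots> \<le> (\<Sum>i \<in> I. a i)"
    using bound prob_compl[OF events] by (intro sum_mono) fastforce
  finally show ?thesis
    using prob_compl[OF G_event] by simp
qed

definition halving :: "(nat set \<Rightarrow> nat set \<times> nat set) \<Rightarrow> bool" where
  "halving split \<longleftrightarrow> (\<forall>A. 2 \<le> card A \<longrightarrow>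
     fst (split A) \<union> snd (split A) = A \<and> fst (split A) \<inter> snd (split A) = {}
     \<and> card (fst (split A)) = card A div 2)"

lemma halving_Un:
  "halving split \<Longrightarrow> 2 \<le> card A \<Longrightarrow> fst (split A) \<union> snd (split A) = A"
  unfolding halving_def by blast

lemma halving_card_less:
  assumes "halving split" and "2 \<le> card A"
  shows "card (fst (split A)) < card A" and "card (snd (split A)) < card A"
proof -
  have "finite A"
    using \<open>2 \<le> card A\<close> card.infinite by fastforce
  moreover have "fst (split A) \<union> snd (split A) = A" "fst (split A) \<inter> snd (split A) = {}"
    and card_fst: "card (fst (split A)) = card A div 2"
    using assms unfolding halving_def by blast+
  ultimately have "card A = card (fst (split A)) + card (snd (split A))"
    by (metis card_Un_disjoint finite_Un)
  then show "card (fst (split A)) < card A" and "card (snd (split A)) < card A"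
    using card_fst \<open>2 \<le> card A\<close> by linarith+
qed

lemma split_tree_subset:
  assumes "halving split"
  shows "A \<in> split_tree split R \<Longrightarrow> A \<subseteq> R"
  by (induction rule: split_tree.induct) (use halving_Un[OF assms] in blast)+

lemma finite_split_tree:
  "halving split \<Longrightarrow> finite R \<Longrightarrow> finite (split_tree split R)"
  by (meson Pow_iff finite_Pow_iff rev_finite_subset split_tree_subset subsetI)

lemma queried_in_split_tree:
  "queried split R ucb \<tau> w A \<Longrightarrow> A \<in> split_tree split R"
  by (induction rule: queried.induct) (auto intro: split_tree.intros)

lemma queried_singleton:
  assumes "halving split" and "finite A" and "queried split R ucb \<tau> w A" and "j \<in> A"
    and unpruned: "\<And>B. queried split R ucb \<tau> w B \<Longrightarrow> j \<in> B \<Longrightarrow> \<tau> \<le> ucb B w"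
  shows "queried split R ucb \<tau> w {j}"
  using assms(2-4)
proof (induction "card A" arbitrary: A rule: less_induct)
  case less
  note A = less.prems
  show ?case
  proof (cases "card A \<le> 1")
    case True
    moreover have "0 < card A"
      using A(1,3) card_gt_0_iff by blast
    ultimately have "card A = 1"
      by linarith
    then obtain x where "A = {x}"
      by (rule card_1_singletonE)
    then have "A = {j}"
      using A(3) by simp
    then show ?thesis
      using A(2) by simp
  next
    case False
    then have "2 \<le> card A"
      by simp
    have "\<tau> \<le> ucb A w"
      using unpruned[OF A(2,3)] .
    then have left: "queried split R ucb \<tau> w (fst (split A))"
      and right: "queried split R ucb \<tau> w (snd (split A))"
      using queried.left[OF A(2)] queried.right[OF A(2)] \<open>2 \<le> card A\<close> by auto
    have halves: "fst (split A) \<union> snd (split A) = A"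
      using halving_Un[OF \<open>halving split\<close> \<open>2 \<le> card A\<close>] .
    then have "finite (fst (split A))" "finite (snd (split A))"
      using A(1) by (metis finite_Un)+
    note smaller = halving_card_less[OF \<open>halving split\<close> \<open>2 \<le> card A\<close>]
    consider "j \<in> fst (split A)" | "j \<in> snd (split A)"
      using halves A(3) by blast
    then show ?thesis
    proof cases
      case 1
      show ?thesis
        by (rule less.hyps[OF smaller(1) \<open>finite (fst (split A))\<close> left 1])
    next
      case 2
      show ?thesis
        by (rule less.hyps[OF smaller(2) \<open>finite (snd (split A))\<close> right 2])
    qed
  qed
qed

lemma search_keeps_hit_groups:
  assumes "halving split" and "finite R" and "S \<subseteq> R"
    and strong: "\<And>A. A \<in> split_tree split R \<Longrightarrow> A \<inter> S \<noteq> {} \<Longrightarrow> \<tau> \<le> E A"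
    and valid: "\<And>A. A \<in> split_tree split R \<Longrightarrow> E A \<le> ucb A w"
  shows "(\<forall>A. pruned split R ucb \<tau> w A \<longrightarrow> A \<inter> S = {})
    \<and> (\<forall>j \<in> S. queried split R ucb \<tau> w {j} \<and> \<tau> \<le> ucb {j} w)"
proof -
  have unpruned: "\<tau> \<le> ucb A w" if "queried split R ucb \<tau> w A" and "A \<inter> S \<noteq> {}" for A
    using strong[OF queried_in_split_tree[OF that(1)] that(2)]
      valid[OF queried_in_split_tree[OF that(1)]] by linarith
  have "A \<inter> S = {}" if "pruned split R ucb \<tau> w A" for A
    using that unpruned unfolding pruned_def by (meson not_le)
  moreover have "queried split R ucb \<tau> w {j} \<and> \<tau> \<le> ucb {j} w" if "j \<in> S" for j
  proof -
    have unpruned_j: "\<tau> \<le> ucb B w" if "queried split R ucb \<tau> w B" and "j \<in> B" for B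
      using unpruned[OF that(1)] that(2) \<open>j \<in> S\<close> by blast
    have "j \<in> R"
      using \<open>S \<subseteq> R\<close> \<open>j \<in> S\<close> by blast
    have "queried split R ucb \<tau> w {j}"
      by (rule queried_singleton[where ucb = ucb, OF \<open>halving split\<close> \<open>finite R\<close> queried.root
            \<open>j \<in> R\<close> unpruned_j])
    with unpruned_j show ?thesis
      by simp
  qed
  ultimately show ?thesis
    by blast
qed

theorem theoremB1:
  fixes M :: "'w measure" and N :: nat and \<tau> \<alpha>_tot :: real
    and \<alpha> :: "nat set \<Rightarrow> real" and ucb :: "nat set \<Rightarrow> 'w \<Rightarrow> real"
    and split :: "nat set \<Rightarrow> nat set \<times> nat set"
    and lab :: "nat set \<Rightarrow> 'x \<Rightarrow> bool" and b :: bool and Dp Dm :: "'x set"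
  assumes "prob_space M"
    and "0 < \<tau>" and "\<tau> \<le> 1"
    and "finite Dp" and "Dp \<noteq> {}" and "finite Dm" and "Dm \<noteq> {}"
    and "\<forall>x \<in> Dp \<union> Dm. lab {} x = b"
    and halves: "\<forall>A. 2 \<le> card A \<longrightarrow>
           fst (split A) \<union> snd (split A) = A \<and> fst (split A) \<inter> snd (split A) = {}
           \<and> card (fst (split A)) = card A div 2"
    and A2: "\<forall>A \<in> split_tree split {1..N}.
           A \<inter> agonists (strength lab b Dp Dm) \<tau> N \<noteq> {} \<longrightarrow> strength lab b Dp Dm A \<ge> \<tau>"
    and A3: "\<forall>A \<in> split_tree split {1..N}. ucb A \<in> borel_measurable M \<and>
           measure M {w \<in> space M. strength lab b Dp Dm A \<le> ucb A w} \<ge> 1 - \<alpha> A"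
    and budget: "(\<Sum>A \<in> split_tree split {1..N}. \<alpha> A) \<le> \<alpha>_tot"
  shows "\<exists>G \<in> sets M. measure M G \<ge> 1 - \<alpha>_tot \<and>
           (\<forall>w \<in> G.
              (\<forall>A. pruned split {1..N} ucb \<tau> w A \<longrightarrow> A \<inter> agonists (strength lab b Dp Dm) \<tau> N = {})
            \<and> (\<forall>j \<in> agonists (strength lab b Dp Dm) \<tau> N.
                 queried split {1..N} ucb \<tau> w {j} \<and> \<tau> \<le> ucb {j} w))"
proof -
  interpret prob_space M by fact
  define T where "T = split_tree split {1..N}"
  define G where "G = {w \<in> space M. \<forall>A \<in> T. strength lab b Dp Dm A \<le> ucb A w}"
  have "halving split"
    using halves unfolding halving_def .
  then have "finite T"
    unfolding T_def by (simp add: finite_split_tree)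
  have events: "{w \<in> space M. strength lab b Dp Dm A \<le> ucb A w} \<in> events" if "A \<in> T" for A
    using A3 that unfolding T_def borel_measurable_iff_ge by blast
  have "G \<in> events"
    unfolding G_def using sets.sets_Collect_finite_All[OF events \<open>finite T\<close>] .
  moreover have "prob G \<ge> 1 - (\<Sum>A \<in> T. \<alpha> A)"
    unfolding G_def using A3 unfolding T_def
    by (intro prob_all_ge_one_minus_sum[OF \<open>finite T\<close>[unfolded T_def] events[unfolded T_def]]) auto
  moreover have "\<forall>w \<in> G.
      (\<forall>A. pruned split {1..N} ucb \<tau> w A \<longrightarrow> A \<inter> agonists (strength lab b Dp Dm) \<tau> N = {})
    \<and> (\<forall>j \<in> agonists (strength lab b Dp Dm) \<tau> N.
          queried split {1..N} ucb \<tau> w {j} \<and> \<tau> \<le> ucb {j} w)"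
    using A2 unfolding G_def T_def agonists_def
    by (intro ballI search_keeps_hit_groups[where E = "strength lab b Dp Dm", OF \<open>halving split\<close>]) auto
  ultimately show ?thesis
    using budget unfolding T_def by (intro bexI[where x = G]) auto
qed

end
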